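(* Let $G$ be a topological group and $H$ a closed subgroup of finite index, with Bohr compactification $(\operatorname{Bohr}(H),\beta)$. Fix a transversal $X$ for the right cosets, $G=\bigsqcup_{x\in X}Hx$, and for $g\in G$, $x\in X$ let $x\cdot g\in X$ and $c(x,g)\in H$ be the unique elements with $xg=c(x,g)(x\cdot g)$. Let $\sigma(g)\in{\rm Sym}(X)$ be $x\mapsto x\cdot g^{-1}$. Define the compact group $\operatorname{Ind}(\operatorname{Bohr}(H),X)=\operatorname{Bohr}(H)^X\rtimes{\rm Sym}(X)$, where ${\rm Sym}(X)$ acts by $\tau((k_x)_{x\in X})=(k_{\tau^{-1}(x)})_{x\in X}$, and define $\widetilde\beta:G\to\operatorname{Ind}(\operatorname{Bohr}(H),X)$ by $\widetilde\beta(g)=\big((\beta(c(x,g)))_{x\in X},\sigma(g)\big)$. Then $\widetilde\beta$ is a continuous homomorphism, and the closure of $\widetilde\beta(G)$ in $\operatorname{Ind}(\operatorname{Bohr}(H),X)$, together with $\widetilde\beta$, is a Bohr compactification of $G$.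
   Context: A Bohr compactification of a topological group $G$ is a pair $(B,\beta)$ with $B$ compact and $\beta:G\to B$ a continuous homomorphism with dense image such that every continuous homomorphism from $G$ to a compact group $L$ factors as $\alpha'\circ\beta$ with $\alpha':B\to L$ continuous. *)

theory Defs
  imports "HOL-Algebra.Algebra" "HOL-Analysis.Analysis"
begin

definition topological_group :: "'a monoid \<Rightarrow> 'a topology \<Rightarrow> bool" where
  "topological_group G T \<longleftrightarrow> group G \<and> topspace T = carrier G \<and>
     continuous_map (prod_topology T T) T (\<lambda>(x, y). x \<otimes>\<^bsub>G\<^esub> y) \<and>
     continuous_map T T (\<lambda>x. inv\<^bsub>G\<^esub> x)"

definition compact_group :: "'a monoid \<Rightarrow> 'a topology \<Rightarrow> bool" where
  "compact_group G T \<longleftrightarrow> topological_group G T \<and> compact_space T \<and> Hausdorff_space T"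

text \<open>Bohr compactification; the universal property is stated for compact groups whose
  carrier lives in the type 'l (given by the first, dummy, argument).\<close>
definition bohr_compactification ::
  "'l itself \<Rightarrow> 'a monoid \<Rightarrow> 'a topology \<Rightarrow> 'b monoid \<Rightarrow> 'b topology \<Rightarrow> ('a \<Rightarrow> 'b) \<Rightarrow> bool" where
  "bohr_compactification (_::'l itself) G TG B TB \<beta> \<longleftrightarrow>
     topological_group G TG \<and> compact_group B TB \<and>
     \<beta> \<in> hom G B \<and> continuous_map TG TB \<beta> \<and>
     TB closure_of (\<beta> ` carrier G) = carrier B \<and>
     (\<forall>(L::'l monoid) TL \<phi>. compact_group L TL \<and> \<phi> \<in> hom G L \<and> continuous_map TG TL \<phi> \<longrightarrow>
        (\<exists>\<alpha>. continuous_map TB TL \<alpha> \<and> (\<forall>g\<in>carrier G. \<phi> g = \<alpha> (\<beta> g))))"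

text \<open>For a transversal Tr of the right cosets H x: x \<cdot> g and c(x,g) with x g = c(x,g) (x \<cdot> g).\<close>
definition tr_act :: "'a monoid \<Rightarrow> 'a set \<Rightarrow> 'a set \<Rightarrow> 'a \<Rightarrow> 'a \<Rightarrow> 'a" where
  "tr_act G H Tr x g = (THE y. y \<in> Tr \<and> (\<exists>h\<in>H. x \<otimes>\<^bsub>G\<^esub> g = h \<otimes>\<^bsub>G\<^esub> y))"

definition tr_cocycle :: "'a monoid \<Rightarrow> 'a set \<Rightarrow> 'a set \<Rightarrow> 'a \<Rightarrow> 'a \<Rightarrow> 'a" where
  "tr_cocycle G H Tr x g = (THE h. h \<in> H \<and> x \<otimes>\<^bsub>G\<^esub> g = h \<otimes>\<^bsub>G\<^esub> tr_act G H Tr x g)"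

definition tr_perm :: "'a monoid \<Rightarrow> 'a set \<Rightarrow> 'a set \<Rightarrow> 'a \<Rightarrow> ('a \<Rightarrow> 'a)" where
  "tr_perm G H Tr g = (\<lambda>x. if x \<in> Tr then tr_act G H Tr x (inv\<^bsub>G\<^esub> g) else x)"

text \<open>Ind(B, Tr) = B^Tr \<rtimes> Sym(Tr), with \<tau>((k_x)_x) = (k_{\<tau>\<inverse>(x)})_x.\<close>
definition Ind :: "'b monoid \<Rightarrow> 'a set \<Rightarrow> (('a \<Rightarrow> 'b) \<times> ('a \<Rightarrow> 'a)) monoid" where
  "Ind B Tr = \<lparr> carrier = (PiE Tr (\<lambda>_. carrier B)) \<times> {\<tau>. \<tau> permutes Tr},
       monoid.mult = (\<lambda>(k, \<tau>) (k', \<tau>'). ((\<lambda>x\<in>Tr. k x \<otimes>\<^bsub>B\<^esub> k' (Hilbert_Choice.inv \<tau> x)), \<tau> \<circ> \<tau>')),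
       monoid.one = ((\<lambda>x\<in>Tr. \<one>\<^bsub>B\<^esub>), id) \<rparr>"

definition Ind_topology :: "'b topology \<Rightarrow> 'a set \<Rightarrow> (('a \<Rightarrow> 'b) \<times> ('a \<Rightarrow> 'a)) topology" where
  "Ind_topology TB Tr = prod_topology (product_topology (\<lambda>_. TB) Tr) (discrete_topology {\<tau>. \<tau> permutes Tr})"

definition induced_map :: "'a monoid \<Rightarrow> 'a set \<Rightarrow> 'a set \<Rightarrow> ('a \<Rightarrow> 'b) \<Rightarrow> 'a \<Rightarrow> ('a \<Rightarrow> 'b) \<times> ('a \<Rightarrow> 'a)" where
  "induced_map G H Tr \<beta> g = ((\<lambda>x\<in>Tr. \<beta> (tr_cocycle G H Tr x g)), tr_perm G H Tr g)"

end

theory Submission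
  imports Defs
begin

text \<open>The cocycle identity c(x, g h) = c(x, g) c(x \<cdot> g, h) and x \<cdot> (g h) = (x \<cdot> g) \<cdot> h make the
  induced map a homomorphism into the wreath product Bohr(H)^X \<rtimes> Sym(X). A closed subgroup of finite
  index is open, so on each open set {g. x g \<in> H y} the cocycle c(x, -) is a two-sided translate into H
  and \<sigma> is locally constant; hence the induced map is continuous. For the universal property, a
  continuous homomorphism \<phi> : G \<rightarrow> L restricts to H and so factors as \<alpha>' \<circ> \<beta> on H; fixing x0 \<in> X,
  \<phi>(g) = \<phi>(x0)\<inverse> \<phi>(c(x0, g)) \<phi>(x0 \<cdot> g), and both c(x0, g) and x0 \<cdot> g are continuous functions of the
  image of g in the induced group. The closure of that image is a compact group, which gives the
  Bohr compactification.\<close>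

section \<open>Topological groups\<close>

lemma topological_group_group: "topological_group G T \<Longrightarrow> group G"
  by (simp add: topological_group_def)

lemma topological_group_topspace: "topological_group G T \<Longrightarrow> topspace T = carrier G"
  by (simp add: topological_group_def)

lemma continuous_map_group_mult:
  assumes "topological_group G T" "continuous_map Z T f" "continuous_map Z T g"
  shows "continuous_map Z T (\<lambda>x. f x \<otimes>\<^bsub>G\<^esub> g x)"
proof -
  have "continuous_map Z T ((\<lambda>(x, y). x \<otimes>\<^bsub>G\<^esub> y) \<circ> (\<lambda>x. (f x, g x)))"
    using assms by (intro continuous_map_compose) (auto simp: topological_group_def continuous_map_paired)
  then show ?thesis by (simp add: o_def)
qed

lemma continuous_map_group_inv:
  assumes "topological_group G T" "continuous_map Z T f"
  shows "continuous_map Z T (\<lambda>x. inv\<^bsub>G\<^esub> (f x))"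
proof -
  have "continuous_map Z T ((\<lambda>x. inv\<^bsub>G\<^esub> x) \<circ> f)"
    using assms by (intro continuous_map_compose) (auto simp: topological_group_def)
  then show ?thesis by (simp add: o_def)
qed

lemma continuous_map_two_sided_translation:
  assumes "topological_group G T" "a \<in> carrier G" "b \<in> carrier G"
  shows "continuous_map T T (\<lambda>g. a \<otimes>\<^bsub>G\<^esub> g \<otimes>\<^bsub>G\<^esub> b)"
  using assms by (intro continuous_map_group_mult[OF assms(1)]) (auto simp: topological_group_topspace)

lemma continuous_map_two_sided_translation_inv:
  assumes "topological_group G T" "a \<in> carrier G" "b \<in> carrier G"
  shows "continuous_map T T (\<lambda>g. a \<otimes>\<^bsub>G\<^esub> inv\<^bsub>G\<^esub> g \<otimes>\<^bsub>G\<^esub> b)"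
  using assms
  by (intro continuous_map_group_mult[OF assms(1)] continuous_map_group_inv[OF assms(1)])
     (auto simp: topological_group_topspace)

lemma topological_group_subgroup:
  assumes tg: "topological_group G T" and S: "subgroup S G"
  shows "topological_group (G\<lparr>carrier := S\<rparr>) (subtopology T S)"
proof -
  have grp: "group G" using tg by (rule topological_group_group)
  have top: "topspace (subtopology T S) = S"
    using subgroup.subset[OF S] tg by (auto simp: topological_group_topspace)
  have mult_cont: "continuous_map (prod_topology T T) T (\<lambda>(x, y). x \<otimes>\<^bsub>G\<^esub> y)"
    and inv_cont: "continuous_map T T (\<lambda>x. inv\<^bsub>G\<^esub> x)"
    using tg by (auto simp: topological_group_def)
  have "continuous_map (prod_topology (subtopology T S) (subtopology T S)) (subtopology T S)
          (\<lambda>(x, y). x \<otimes>\<^bsub>G\<^esub> y)"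
    unfolding subtopology_Times[symmetric]
    by (rule continuous_map_into_subtopology[OF continuous_map_from_subtopology[OF mult_cont]])
       (use S in \<open>auto simp: subgroup.m_closed\<close>)
  moreover have "continuous_map (subtopology T S) (subtopology T S) (\<lambda>x. inv\<^bsub>G\<lparr>carrier := S\<rparr>\<^esub> x)"
  proof (rule continuous_map_eq)
    show "continuous_map (subtopology T S) (subtopology T S) (\<lambda>x. inv\<^bsub>G\<^esub> x)"
      by (rule continuous_map_into_subtopology[OF continuous_map_from_subtopology[OF inv_cont]])
         (use S in \<open>auto simp: subgroup.m_inv_closed\<close>)
  qed (use top grp S in \<open>auto simp: group.m_inv_consistent\<close>)
  ultimately show ?thesis
    using top grp S by (simp add: topological_group_def subgroup.subgroup_is_group)
qed

lemma subgroup_closure_of: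
  assumes tg: "topological_group G T" and S: "subgroup S G"
  shows "subgroup (T closure_of S) G"
proof -
  have mult_cont: "continuous_map (prod_topology T T) T (\<lambda>(x, y). x \<otimes>\<^bsub>G\<^esub> y)"
    and inv_cont: "continuous_map T T (\<lambda>x. inv\<^bsub>G\<^esub> x)"
    using tg by (auto simp: topological_group_def)
  have S_closure: "S \<subseteq> T closure_of S"
    using subgroup.subset[OF S] topological_group_topspace[OF tg] by (intro closure_of_subset) simp
  show ?thesis
  proof (rule group.subgroupI[OF topological_group_group[OF tg]])
    show "T closure_of S \<subseteq> carrier G"
      using closure_of_subset_topspace topological_group_topspace[OF tg] by metis
    show "T closure_of S \<noteq> {}"
      using S_closure subgroup.one_closed[OF S] by blast
  next
    fix a assume a: "a \<in> T closure_of S"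
    have "(\<lambda>x. inv\<^bsub>G\<^esub> x) ` (T closure_of S) \<subseteq> T closure_of ((\<lambda>x. inv\<^bsub>G\<^esub> x) ` S)"
      using inv_cont by (rule continuous_map_image_closure_subset)
    also have "\<dots> \<subseteq> T closure_of S"
      by (rule closure_of_mono) (use subgroup.m_inv_closed[OF S] in auto)
    finally show "inv\<^bsub>G\<^esub> a \<in> T closure_of S" using a by blast
  next
    fix a b assume "a \<in> T closure_of S" "b \<in> T closure_of S"
    then have ab: "(a, b) \<in> prod_topology T T closure_of (S \<times> S)" by (simp add: closure_of_Times)
    have "(\<lambda>(x, y). x \<otimes>\<^bsub>G\<^esub> y) ` (prod_topology T T closure_of (S \<times> S))
            \<subseteq> T closure_of ((\<lambda>(x, y). x \<otimes>\<^bsub>G\<^esub> y) ` (S \<times> S))"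
      using mult_cont by (rule continuous_map_image_closure_subset)
    also have "\<dots> \<subseteq> T closure_of S"
      by (rule closure_of_mono) (use subgroup.m_closed[OF S] in auto)
    finally show "a \<otimes>\<^bsub>G\<^esub> b \<in> T closure_of S" using ab by blast
  qed
qed

text \<open>The complement of a closed subgroup of finite index is a finite union of closed cosets.\<close>
lemma openin_subgroup_of_finite_index:
  fixes G (structure)
  assumes tg: "topological_group G T" and H: "subgroup H G" "closedin T H"
    and fin: "finite (rcosets H)"
  shows "openin T H"
proof -
  interpret group G using tg by (rule topological_group_group)
  have top: "topspace T = carrier G" using tg by (rule topological_group_topspace)
  have coset_closed: "closedin T (H #> a)" if a: "a \<in> carrier G" for a
  proof -
    have "H #> a = {g \<in> topspace T. g \<otimes> inv a \<in> H}"
      using subgroup.elemrcos_carrier[OF H(1) is_group a] subgroup.rcos_module[OF H(1) is_group a]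
      by (auto simp: top)
    moreover have "continuous_map T T (\<lambda>g. g \<otimes> inv a)"
      using a by (intro continuous_map_group_mult[OF tg]) (auto simp: top)
    ultimately show ?thesis using closedin_continuous_map_preimage H(2) by metis
  qed
  have "carrier G - H = \<Union>(rcosets H - {H})"
  proof (intro equalityI subsetI)
    fix g assume g: "g \<in> carrier G - H"
    then have "g \<in> H #> g" "H #> g \<noteq> H" using rcos_self[OF _ H(1)] by auto
    then show "g \<in> \<Union>(rcosets H - {H})"
      using g rcosetsI[OF subgroup.subset[OF H(1)]] by blast
  next
    fix g assume "g \<in> \<Union>(rcosets H - {H})"
    then obtain a where a: "a \<in> carrier G" "g \<in> H #> a" "H #> a \<noteq> H"
      by (auto simp: RCOSETS_def)
    have "g \<in> carrier G" using subgroup.elemrcos_carrier[OF H(1) is_group a(1,2)] .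
    moreover have "g \<notin> H"
      using a repr_independence[OF a(2,1) H(1)] coset_join2[OF _ H(1)] calculation by auto
    ultimately show "g \<in> carrier G - H" by blast
  qed
  moreover have "closedin T (\<Union>(rcosets H - {H}))"
    using fin coset_closed by (intro closedin_Union) (auto simp: RCOSETS_def)
  ultimately show ?thesis
    using subgroup.subset[OF H(1)] by (simp add: openin_closedin_eq top)
qed


section \<open>Continuity and discrete topologies\<close>

lemma continuous_map_prod_discrete_topology:
  assumes "\<And>s. s \<in> S \<Longrightarrow> continuous_map Z Y (\<lambda>a. f (a, s))"
  shows "continuous_map (prod_topology Z (discrete_topology S)) Y f"
proof (rule pasting_lemma[where I=S and T="\<lambda>s. topspace Z \<times> {s}" and f="\<lambda>_. f"])
  fix s assume s: "s \<in> S"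
  show "openin (prod_topology Z (discrete_topology S)) (topspace Z \<times> {s})"
    using s by (simp add: openin_prod_Times_iff)
  have "continuous_map (prod_topology Z (discrete_topology S)) Y (\<lambda>p. f (fst p, s))"
    using continuous_map_compose[OF continuous_map_fst assms[OF s]] by (simp add: o_def)
  then show "continuous_map (subtopology (prod_topology Z (discrete_topology S)) (topspace Z \<times> {s})) Y f"
    by (rule continuous_map_eq[OF continuous_map_from_subtopology]) auto
qed (auto simp: mem_Times_iff)

lemma continuous_map_prod_prod_discrete_topology:
  assumes "\<And>s s'. s \<in> S \<Longrightarrow> s' \<in> S' \<Longrightarrow>
             continuous_map (prod_topology Z Z') Y (\<lambda>(a, a'). f ((a, s), (a', s')))"
  shows "continuous_map (prod_topology (prod_topology Z (discrete_topology S))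
                                       (prod_topology Z' (discrete_topology S'))) Y f"
    (is "continuous_map ?X Y f")
proof (rule pasting_lemma[where I="S \<times> S'" and f="\<lambda>_. f"
      and T="\<lambda>(s, s'). (topspace Z \<times> {s}) \<times> (topspace Z' \<times> {s'})"])
  fix i assume "i \<in> S \<times> S'"
  then obtain s s' where ss: "i = (s, s')" "s \<in> S" "s' \<in> S'" by auto
  show "openin ?X ((\<lambda>(s, s'). (topspace Z \<times> {s}) \<times> (topspace Z' \<times> {s'})) i)"
    using ss by (simp add: openin_prod_Times_iff)
  have proj: "continuous_map ?X (prod_topology Z Z') (\<lambda>p. (fst (fst p), fst (snd p)))"
    by (intro continuous_map_pairedI continuous_map_compose[OF continuous_map_fst continuous_map_fst, unfolded o_def]
        continuous_map_compose[OF continuous_map_snd continuous_map_fst, unfolded o_def])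
  have "continuous_map ?X Y (\<lambda>p. f ((fst (fst p), s), (fst (snd p), s')))"
    using continuous_map_compose[OF proj assms[OF ss(2,3)]] by (simp add: o_def)
  then show "continuous_map (subtopology ?X ((\<lambda>(s, s'). (topspace Z \<times> {s}) \<times> (topspace Z' \<times> {s'})) i)) Y f"
    by (rule continuous_map_eq[OF continuous_map_from_subtopology]) (auto simp: ss)
next
  fix x assume "x \<in> topspace ?X"
  then show "\<exists>j. j \<in> S \<times> S' \<and> x \<in> (\<lambda>(s, s'). (topspace Z \<times> {s}) \<times> (topspace Z' \<times> {s'})) j \<and> f x = f x"
    by (intro exI[of _ "(snd (fst x), snd (snd x))"]) (auto simp: mem_Times_iff)
qed simp


lemma continuous_map_into_discrete_topology:
  assumes "f \<in> topspace T \<rightarrow> U" "\<And>u. u \<in> U \<Longrightarrow> openin T {x \<in> topspace T. f x = u}"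
  shows "continuous_map T (discrete_topology U) f"
  unfolding continuous_map_def
proof (intro conjI allI impI)
  fix V assume "openin (discrete_topology U) V"
  then have "V \<subseteq> U" by simp
  have "{x \<in> topspace T. f x \<in> V} = (\<Union>u\<in>V. {x \<in> topspace T. f x = u})" by auto
  also have "openin T \<dots>"
    using assms(2) \<open>V \<subseteq> U\<close> by (intro openin_Union) auto
  finally show "openin T {x \<in> topspace T. f x \<in> V}" .
qed (use assms(1) in simp)

section \<open>Transversals of right cosets\<close>

locale right_transversal = group G for G :: "'a monoid" (structure) +
  fixes H Tr :: "'a set"
  assumes subgroup_H: "subgroup H G"
    and transversal_subset: "Tr \<subseteq> carrier G"
    and transversal_unique: "g \<in> carrier G \<Longrightarrow> \<exists>!x. x \<in> Tr \<and> g \<in> H #> x"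
begin

abbreviation "act \<equiv> tr_act G H Tr"
abbreviation "cocycle \<equiv> tr_cocycle G H Tr"
abbreviation "coset_perm \<equiv> tr_perm G H Tr"

lemma H_subset: "H \<subseteq> carrier G"
  using subgroup_H by (rule subgroup.subset)

lemma transversal_closed: "x \<in> Tr \<Longrightarrow> x \<in> carrier G"
  using transversal_subset by blast

lemma rcoset_rep_iff:
  assumes "a \<in> carrier G" "y \<in> carrier G"
  shows "(\<exists>h\<in>H. a = h \<otimes> y) \<longleftrightarrow> a \<otimes> inv y \<in> H"
  using subgroup.rcos_module[OF subgroup_H is_group assms(2,1)] by (auto simp: r_coset_def)

lemma ex1_transversal_rep: "a \<in> carrier G \<Longrightarrow> \<exists>!y. y \<in> Tr \<and> (\<exists>h\<in>H. a = h \<otimes> y)"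
  using transversal_unique unfolding r_coset_def by auto

lemma
  assumes "x \<in> carrier G" "g \<in> carrier G"
  shows tr_act_in_transversal: "act x g \<in> Tr"
    and tr_act_coset: "x \<otimes> g \<otimes> inv (act x g) \<in> H"
proof -
  have "act x g \<in> Tr \<and> (\<exists>h\<in>H. x \<otimes> g = h \<otimes> act x g)"
    unfolding tr_act_def by (rule theI'[OF ex1_transversal_rep]) (use assms in simp)
  then show "act x g \<in> Tr" "x \<otimes> g \<otimes> inv (act x g) \<in> H"
    using rcoset_rep_iff[of "x \<otimes> g" "act x g"] assms transversal_closed by auto
qed

lemma tr_act_closed: "x \<in> carrier G \<Longrightarrow> g \<in> carrier G \<Longrightarrow> act x g \<in> carrier G"
  using tr_act_in_transversal transversal_closed by blast

lemma tr_act_eqI: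
  assumes "x \<in> carrier G" "g \<in> carrier G" "y \<in> Tr" "x \<otimes> g \<otimes> inv y \<in> H"
  shows "act x g = y"
  unfolding tr_act_def
  by (rule the1_equality[OF ex1_transversal_rep]) (use assms rcoset_rep_iff transversal_closed in auto)

lemma tr_cocycle_eq:
  assumes "x \<in> carrier G" "g \<in> carrier G"
  shows "cocycle x g = x \<otimes> g \<otimes> inv (act x g)"
  unfolding tr_cocycle_def
proof (rule the_equality)
  have "act x g \<in> carrier G" using tr_act_closed assms .
  then have "x \<otimes> g = x \<otimes> g \<otimes> inv (act x g) \<otimes> act x g"
    using assms by (simp add: m_assoc)
  then show "x \<otimes> g \<otimes> inv (act x g) \<in> H \<and> x \<otimes> g = x \<otimes> g \<otimes> inv (act x g) \<otimes> act x g"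
    using tr_act_coset assms by simp
next
  fix h assume "h \<in> H \<and> x \<otimes> g = h \<otimes> act x g"
  then show "h = x \<otimes> g \<otimes> inv (act x g)"
    using H_subset tr_act_closed assms by (auto simp: m_assoc)
qed

lemma tr_cocycle_in_H: "x \<in> carrier G \<Longrightarrow> g \<in> carrier G \<Longrightarrow> cocycle x g \<in> H"
  using tr_cocycle_eq tr_act_coset by simp

lemma mult_inv_split:
  assumes "x \<in> carrier G" "g \<in> carrier G" "h \<in> carrier G" "y \<in> carrier G" "z \<in> carrier G"
  shows "x \<otimes> (g \<otimes> h) \<otimes> inv z = (x \<otimes> g \<otimes> inv y) \<otimes> (y \<otimes> h \<otimes> inv z)"
  using assms by (simp add: m_assoc[symmetric]) (simp add: m_assoc)

lemma tr_act_mult: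
  assumes "x \<in> carrier G" "g \<in> carrier G" "h \<in> carrier G"
  shows "act x (g \<otimes> h) = act (act x g) h"
proof (rule tr_act_eqI)
  let ?y = "act x g" and ?z = "act (act x g) h"
  have y: "?y \<in> carrier G" and z: "?z \<in> carrier G" using tr_act_closed assms by auto
  have "x \<otimes> (g \<otimes> h) \<otimes> inv ?z = (x \<otimes> g \<otimes> inv ?y) \<otimes> (?y \<otimes> h \<otimes> inv ?z)"
    by (rule mult_inv_split[OF assms y z])
  also have "\<dots> \<in> H"
    using assms y by (intro subgroup.m_closed[OF subgroup_H] tr_act_coset)
  finally show "x \<otimes> (g \<otimes> h) \<otimes> inv ?z \<in> H" .
qed (use assms tr_act_closed tr_act_in_transversal in auto)

lemma tr_cocycle_mult:
  assumes "x \<in> carrier G" "g \<in> carrier G" "h \<in> carrier G"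
  shows "cocycle x (g \<otimes> h) = cocycle x g \<otimes> cocycle (act x g) h"
proof -
  have y: "act x g \<in> carrier G" and z: "act (act x g) h \<in> carrier G"
    using tr_act_closed assms by auto
  show ?thesis
    using assms y by (simp add: tr_cocycle_eq tr_act_mult mult_inv_split[OF assms y z])
qed

lemma tr_act_one: "x \<in> Tr \<Longrightarrow> act x \<one> = x"
  by (intro tr_act_eqI) (auto simp: transversal_closed subgroup.one_closed[OF subgroup_H])

lemma tr_perm_in_transversal: "g \<in> carrier G \<Longrightarrow> x \<in> Tr \<Longrightarrow> coset_perm g x \<in> Tr"
  by (simp add: tr_perm_def tr_act_in_transversal transversal_closed)

lemma tr_perm_mult:
  assumes "g \<in> carrier G" "h \<in> carrier G"
  shows "coset_perm (g \<otimes> h) = coset_perm g \<circ> coset_perm h"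
proof
  fix x
  show "coset_perm (g \<otimes> h) x = (coset_perm g \<circ> coset_perm h) x"
  proof (cases "x \<in> Tr")
    case True
    then have "coset_perm (g \<otimes> h) x = act (act x (inv h)) (inv g)"
      using assms by (simp add: tr_perm_def inv_mult_group tr_act_mult transversal_closed)
    then show ?thesis
      using True assms by (simp add: tr_perm_def tr_act_in_transversal transversal_closed)
  qed (simp add: tr_perm_def)
qed

lemma tr_perm_one: "coset_perm \<one> = id"
  by (auto simp: tr_perm_def tr_act_one)

lemma tr_perm_inv_comp:
  assumes "g \<in> carrier G"
  shows "coset_perm (inv g) \<circ> coset_perm g = id" "coset_perm g \<circ> coset_perm (inv g) = id"
  using tr_perm_mult[of "inv g" g] tr_perm_mult[of g "inv g"] assms by (simp_all add: tr_perm_one)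

lemma inv_tr_perm: "g \<in> carrier G \<Longrightarrow> Hilbert_Choice.inv (coset_perm g) = coset_perm (inv g)"
  using inv_unique_comp tr_perm_inv_comp by blast

lemma inv_tr_perm_apply:
  "g \<in> carrier G \<Longrightarrow> x \<in> Tr \<Longrightarrow> Hilbert_Choice.inv (coset_perm g) x = act x g"
  by (simp add: inv_tr_perm) (simp add: tr_perm_def)

lemma tr_perm_permutes:
  assumes "g \<in> carrier G"
  shows "coset_perm g permutes Tr"
proof (rule bij_imp_permutes)
  show "bij_betw (coset_perm g) Tr Tr"
    using assms tr_perm_in_transversal pointfree_idE[OF tr_perm_inv_comp(1)[OF assms]]
      pointfree_idE[OF tr_perm_inv_comp(2)[OF assms]]
    by (intro bij_betw_byWitness[where f'="coset_perm (inv g)"]) auto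
qed (simp add: tr_perm_def)

lemma tr_perm_eq_iff:
  assumes "g \<in> carrier G" "\<tau> permutes Tr"
  shows "coset_perm g = \<tau> \<longleftrightarrow> (\<forall>x\<in>Tr. x \<otimes> inv g \<otimes> inv (\<tau> x) \<in> H)"
proof
  assume "coset_perm g = \<tau>"
  then show "\<forall>x\<in>Tr. x \<otimes> inv g \<otimes> inv (\<tau> x) \<in> H"
    using assms tr_act_coset by (auto simp: tr_perm_def transversal_closed)
next
  assume "\<forall>x\<in>Tr. x \<otimes> inv g \<otimes> inv (\<tau> x) \<in> H"
  then have "coset_perm g x = \<tau> x" for x
    using assms permutes_in_image[OF assms(2)] permutes_not_in[OF assms(2)]
    by (cases "x \<in> Tr") (auto simp: tr_perm_def transversal_closed intro!: tr_act_eqI)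
  then show "coset_perm g = \<tau>" ..
qed

lemma transversal_nonempty: "Tr \<noteq> {}"
  using transversal_unique[OF one_closed] by blast

lemma finite_transversal:
  assumes "finite (rcosets H)"
  shows "finite Tr"
proof (rule finite_imageD)
  show "inj_on (\<lambda>x. H #> x) Tr"
  proof (rule inj_onI)
    fix x y assume "x \<in> Tr" "y \<in> Tr" "H #> x = H #> y"
    then show "x = y"
      using transversal_unique[of x] rcos_self[OF _ subgroup_H] transversal_closed by metis
  qed
  show "finite ((\<lambda>x. H #> x) ` Tr)"
    using assms rcosetsI[OF H_subset] transversal_closed by (blast intro: finite_subset)
qed

end


section \<open>The induced group\<close>

locale induced_group = group B for B :: "'b monoid" (structure) + fixes Tr :: "'a set"
begin

lemma Ind_carrier: "carrier (Ind B Tr) = (PiE Tr (\<lambda>_. carrier B)) \<times> {\<tau>. \<tau> permutes Tr}"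
  by (simp add: Ind_def)

lemma Ind_mult:
  "(k, \<tau>) \<otimes>\<^bsub>Ind B Tr\<^esub> (k', \<tau>') = ((\<lambda>x\<in>Tr. k x \<otimes> k' (Hilbert_Choice.inv \<tau> x)), \<tau> \<circ> \<tau>')"
  by (simp add: Ind_def)

lemma Ind_one: "\<one>\<^bsub>Ind B Tr\<^esub> = ((\<lambda>x\<in>Tr. \<one>), id)"
  by (simp add: Ind_def)

lemma inv_permutes_in: "\<tau> permutes Tr \<Longrightarrow> x \<in> Tr \<Longrightarrow> Hilbert_Choice.inv \<tau> x \<in> Tr"
  by (simp add: permutes_in_image permutes_inv)

lemma PiE_carrier_mem: "k \<in> PiE Tr (\<lambda>_. carrier B) \<Longrightarrow> x \<in> Tr \<Longrightarrow> k x \<in> carrier B"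
  by (rule PiE_mem)

lemma Ind_l_inv:
  assumes "\<tau> permutes Tr" "k \<in> PiE Tr (\<lambda>_. carrier B)"
  shows "((\<lambda>x\<in>Tr. inv (k (\<tau> x))), Hilbert_Choice.inv \<tau>) \<otimes>\<^bsub>Ind B Tr\<^esub> (k, \<tau>) = \<one>\<^bsub>Ind B Tr\<^esub>"
    and "((\<lambda>x\<in>Tr. inv (k (\<tau> x))), Hilbert_Choice.inv \<tau>) \<in> carrier (Ind B Tr)"
  using assms
  by (auto simp: Ind_carrier Ind_mult Ind_one permutes_inv_inv inv_permutes_in permutes_inv_o
      permutes_inverses permutes_in_image permutes_inv PiE_carrier_mem intro!: ext)

lemma group_Ind: "group (Ind B Tr)"
proof (rule groupI)
  fix a b assume "a \<in> carrier (Ind B Tr)" "b \<in> carrier (Ind B Tr)"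
  then show "a \<otimes>\<^bsub>Ind B Tr\<^esub> b \<in> carrier (Ind B Tr)"
    by (cases a; cases b) (auto simp: Ind_carrier Ind_mult inv_permutes_in permutes_compose PiE_carrier_mem)
next
  show "\<one>\<^bsub>Ind B Tr\<^esub> \<in> carrier (Ind B Tr)"
    by (auto simp: Ind_carrier Ind_one)
next
  fix a b c assume "a \<in> carrier (Ind B Tr)" "b \<in> carrier (Ind B Tr)" "c \<in> carrier (Ind B Tr)"
  then obtain k \<tau> k' \<tau>' k'' \<tau>'' where abc: "a = (k, \<tau>)" "b = (k', \<tau>')" "c = (k'', \<tau>'')"
    and perm: "\<tau> permutes Tr" "\<tau>' permutes Tr" "\<tau>'' permutes Tr"
    and k: "k \<in> PiE Tr (\<lambda>_. carrier B)" "k' \<in> PiE Tr (\<lambda>_. carrier B)" "k'' \<in> PiE Tr (\<lambda>_. carrier B)"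
    by (auto simp: Ind_carrier)
  have "Hilbert_Choice.inv (\<tau> \<circ> \<tau>') = Hilbert_Choice.inv \<tau>' \<circ> Hilbert_Choice.inv \<tau>"
    using perm by (simp add: o_inv_distrib permutes_bij)
  then show "a \<otimes>\<^bsub>Ind B Tr\<^esub> b \<otimes>\<^bsub>Ind B Tr\<^esub> c = a \<otimes>\<^bsub>Ind B Tr\<^esub> (b \<otimes>\<^bsub>Ind B Tr\<^esub> c)"
    using perm k unfolding abc
    by (auto simp: Ind_mult inv_permutes_in m_assoc o_assoc PiE_carrier_mem intro!: ext)
next
  fix a assume "a \<in> carrier (Ind B Tr)"
  then obtain k \<tau> where a: "a = (k, \<tau>)" "\<tau> permutes Tr" "k \<in> PiE Tr (\<lambda>_. carrier B)"
    by (auto simp: Ind_carrier)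
  then show "\<one>\<^bsub>Ind B Tr\<^esub> \<otimes>\<^bsub>Ind B Tr\<^esub> a = a"
    by (auto simp: Ind_mult Ind_one PiE_carrier_mem intro!: ext) (auto simp: PiE_def extensional_def)
  show "\<exists>y\<in>carrier (Ind B Tr). y \<otimes>\<^bsub>Ind B Tr\<^esub> a = \<one>\<^bsub>Ind B Tr\<^esub>"
    using Ind_l_inv[OF a(2,3)] a(1) by blast
qed

lemma Ind_inv:
  assumes "\<tau> permutes Tr" "k \<in> PiE Tr (\<lambda>_. carrier B)"
  shows "inv\<^bsub>Ind B Tr\<^esub> (k, \<tau>) = ((\<lambda>x\<in>Tr. inv (k (\<tau> x))), Hilbert_Choice.inv \<tau>)"
  using assms Ind_l_inv by (intro group.inv_equality[OF group_Ind]) (auto simp: Ind_carrier)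

lemma topological_group_Ind:
  assumes tgB: "topological_group B TB"
  shows "topological_group (Ind B Tr) (Ind_topology TB Tr)"
proof -
  let ?K = "product_topology (\<lambda>_. TB) Tr" and ?P = "discrete_topology {\<tau>. \<tau> permutes Tr}"
  have proj: "continuous_map ?K TB (\<lambda>k. k x)" if "x \<in> Tr" for x
    using continuous_map_product_projection[of x Tr "\<lambda>_. TB"] that by simp
  have proj_fst: "continuous_map (prod_topology ?K ?K) TB (\<lambda>p. fst p x)"
    and proj_snd: "continuous_map (prod_topology ?K ?K) TB (\<lambda>p. snd p x)" if "x \<in> Tr" for x
    using continuous_map_compose[OF continuous_map_fst proj[OF that]]
      continuous_map_compose[OF continuous_map_snd proj[OF that]] by (simp_all add: o_def)
  have "continuous_map (prod_topology (Ind_topology TB Tr) (Ind_topology TB Tr)) (Ind_topology TB Tr)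
          (\<lambda>(a, b). a \<otimes>\<^bsub>Ind B Tr\<^esub> b)"
    unfolding Ind_topology_def
  proof (rule continuous_map_prod_prod_discrete_topology)
    fix \<tau> \<tau>' assume \<tau>: "\<tau> \<in> {\<tau>. \<tau> permutes Tr}" "\<tau>' \<in> {\<tau>. \<tau> permutes Tr}"
    have "continuous_map (prod_topology ?K ?K) (prod_topology ?K ?P)
            (\<lambda>p. ((\<lambda>x\<in>Tr. fst p x \<otimes> snd p (Hilbert_Choice.inv \<tau> x)), \<tau> \<circ> \<tau>'))"
      using \<tau> unfolding continuous_map_pairwise continuous_map_componentwise
      by (auto intro!: continuous_map_group_mult[OF tgB] proj_fst proj_snd
          simp: o_def inv_permutes_in permutes_compose[unfolded o_def])
    then show "continuous_map (prod_topology ?K ?K) (prod_topology ?K ?P)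
                 (\<lambda>(k, k'). (\<lambda>(a, b). a \<otimes>\<^bsub>Ind B Tr\<^esub> b) ((k, \<tau>), (k', \<tau>')))"
      by (rule continuous_map_eq) (auto simp: Ind_mult)
  qed
  moreover have "continuous_map (Ind_topology TB Tr) (Ind_topology TB Tr) (\<lambda>a. inv\<^bsub>Ind B Tr\<^esub> a)"
  proof (rule continuous_map_eq)
    show "continuous_map (Ind_topology TB Tr) (Ind_topology TB Tr)
            (\<lambda>(k, \<tau>). ((\<lambda>x\<in>Tr. inv (k (\<tau> x))), Hilbert_Choice.inv \<tau>))"
      unfolding Ind_topology_def
    proof (rule continuous_map_prod_discrete_topology)
      fix \<tau> assume "\<tau> \<in> {\<tau>. \<tau> permutes Tr}"
      then show "continuous_map ?K (prod_topology ?K ?P)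
                   (\<lambda>k. (\<lambda>(k, \<tau>). ((\<lambda>x\<in>Tr. inv (k (\<tau> x))), Hilbert_Choice.inv \<tau>)) (k, \<tau>))"
        unfolding continuous_map_pairwise continuous_map_componentwise
        by (auto intro!: continuous_map_group_inv[OF tgB] proj simp: o_def permutes_in_image permutes_inv)
    qed
  qed (auto simp: Ind_topology_def Ind_carrier Ind_inv topological_group_topspace[OF tgB])
  ultimately show ?thesis
    using group_Ind by (simp add: topological_group_def Ind_topology_def Ind_carrier
        topological_group_topspace[OF tgB])
qed

lemma compact_group_Ind:
  assumes "compact_group B TB" "finite Tr"
  shows "compact_group (Ind B Tr) (Ind_topology TB Tr)"
  using assms topological_group_Ind
  by (auto simp: compact_group_def Ind_topology_def compact_space_prod_topology
      compact_space_product_topology compact_space_discrete_topology finite_permutations Hausdorff_space_prod_topology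
      Hausdorff_space_product_topology)

end


section \<open>The induced map\<close>

context right_transversal
begin

lemma induced_map_hom:
  assumes "group B" and \<beta>: "\<beta> \<in> hom (G\<lparr>carrier := H\<rparr>) B"
  shows "induced_map G H Tr \<beta> \<in> hom G (Ind B Tr)"
proof (rule homI)
  interpret B: induced_group B Tr using assms(1) by (rule induced_group.intro)
  have \<beta>_closed: "h \<in> H \<Longrightarrow> \<beta> h \<in> carrier B" for h
    using hom_in_carrier[OF \<beta>] by simp
  have \<beta>_mult: "h \<in> H \<Longrightarrow> h' \<in> H \<Longrightarrow> \<beta> (h \<otimes> h') = \<beta> h \<otimes>\<^bsub>B\<^esub> \<beta> h'" for h h'
    using hom_mult[OF \<beta>] by simp
  fix g assume g: "g \<in> carrier G"
  then show "induced_map G H Tr \<beta> g \<in> carrier (Ind B Tr)"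
    by (auto simp: induced_map_def B.Ind_carrier tr_perm_permutes \<beta>_closed tr_cocycle_in_H
        transversal_closed)
  fix h assume h: "h \<in> carrier G"
  show "induced_map G H Tr \<beta> (g \<otimes> h) = induced_map G H Tr \<beta> g \<otimes>\<^bsub>Ind B Tr\<^esub> induced_map G H Tr \<beta> h"
    unfolding induced_map_def B.Ind_mult
    using g h by (auto intro!: ext simp: inv_tr_perm_apply tr_act_in_transversal tr_cocycle_mult
        tr_perm_mult transversal_closed \<beta>_mult tr_cocycle_in_H tr_act_closed)
qed

text \<open>On the open set of those g with x g \<in> H y, the cocycle c(x, g) is the translate x g y\<inverse>.\<close>
lemma continuous_map_tr_cocycle:
  assumes tg: "topological_group G TG" and H_open: "openin TG H" and x: "x \<in> Tr"
    and \<beta>: "continuous_map (subtopology TG H) TB \<beta>"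
  shows "continuous_map TG TB (\<lambda>g. \<beta> (cocycle x g))"
proof (rule pasting_lemma[where I=Tr and T="\<lambda>y. {g \<in> topspace TG. x \<otimes> g \<otimes> inv y \<in> H}"
      and f="\<lambda>y g. \<beta> (x \<otimes> g \<otimes> inv y)"])
  fix y assume "y \<in> Tr"
  then have translation: "continuous_map TG TG (\<lambda>g. x \<otimes> g \<otimes> inv y)"
    using x by (intro continuous_map_two_sided_translation[OF tg]) (auto simp: transversal_closed)
  then show "openin TG {g \<in> topspace TG. x \<otimes> g \<otimes> inv y \<in> H}"
    using H_open by (rule openin_continuous_map_preimage)
  have "continuous_map (subtopology TG {g \<in> topspace TG. x \<otimes> g \<otimes> inv y \<in> H}) (subtopology TG H)
          (\<lambda>g. x \<otimes> g \<otimes> inv y)"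
    by (rule continuous_map_into_subtopology[OF continuous_map_from_subtopology[OF translation]]) auto
  then show "continuous_map (subtopology TG {g \<in> topspace TG. x \<otimes> g \<otimes> inv y \<in> H}) TB
               (\<lambda>g. \<beta> (x \<otimes> g \<otimes> inv y))"
    using continuous_map_compose[OF _ \<beta>] by (simp add: o_def)
next
  fix y z g
  assume "y \<in> Tr" "z \<in> Tr" "g \<in> topspace TG \<inter> {g \<in> topspace TG. x \<otimes> g \<otimes> inv y \<in> H}
                                                   \<inter> {g \<in> topspace TG. x \<otimes> g \<otimes> inv z \<in> H}"
  then show "\<beta> (x \<otimes> g \<otimes> inv y) = \<beta> (x \<otimes> g \<otimes> inv z)"
    using tr_act_eqI[of x g y] tr_act_eqI[of x g z] x topological_group_topspace[OF tg] by (auto simp: transversal_closed)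
next
  fix g assume "g \<in> topspace TG"
  then show "\<exists>y. y \<in> Tr \<and> g \<in> {g \<in> topspace TG. x \<otimes> g \<otimes> inv y \<in> H}
                \<and> \<beta> (cocycle x g) = \<beta> (x \<otimes> g \<otimes> inv y)"
    using x topological_group_topspace[OF tg] tr_act_in_transversal tr_act_coset tr_cocycle_eq
    by (intro exI[of _ "act x g"]) (auto simp: transversal_closed)
qed

lemma continuous_map_tr_perm:
  assumes tg: "topological_group G TG" and H_open: "openin TG H" and fin: "finite Tr"
  shows "continuous_map TG (discrete_topology {\<tau>. \<tau> permutes Tr}) coset_perm"
proof (rule continuous_map_into_discrete_topology)
  have top: "topspace TG = carrier G" using tg by (rule topological_group_topspace)
  show "coset_perm \<in> topspace TG \<rightarrow> {\<tau>. \<tau> permutes Tr}"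
    using tr_perm_permutes top by auto
  fix \<tau> assume "\<tau> \<in> {\<tau>. \<tau> permutes Tr}"
  then have \<tau>: "\<tau> permutes Tr" by simp
  have "{g \<in> topspace TG. coset_perm g = \<tau>}
          = (\<Inter>x\<in>Tr. {g \<in> topspace TG. x \<otimes> inv g \<otimes> inv (\<tau> x) \<in> H}) \<inter> topspace TG"
    using tr_perm_eq_iff[OF _ \<tau>] top by auto
  also have "openin TG \<dots>"
  proof (rule openin_INT[OF fin])
    fix x assume "x \<in> Tr"
    then have "continuous_map TG TG (\<lambda>g. x \<otimes> inv g \<otimes> inv (\<tau> x))"
      using permutes_in_image[OF \<tau>]
      by (intro continuous_map_two_sided_translation_inv[OF tg]) (auto simp: transversal_closed)
    then show "openin TG {g \<in> topspace TG. x \<otimes> inv g \<otimes> inv (\<tau> x) \<in> H}"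
      using H_open by (rule openin_continuous_map_preimage)
  qed
  finally show "openin TG {g \<in> topspace TG. coset_perm g = \<tau>}" .
qed

lemma continuous_map_induced_map:
  assumes tg: "topological_group G TG" and "openin TG H" "finite Tr"
    and \<beta>: "continuous_map (subtopology TG H) TB \<beta>"
  shows "continuous_map TG (Ind_topology TB Tr) (induced_map G H Tr \<beta>)"
  unfolding induced_map_def Ind_topology_def
proof (rule continuous_map_pairedI)
  show "continuous_map TG (product_topology (\<lambda>_. TB) Tr) (\<lambda>g. \<lambda>x\<in>Tr. \<beta> (cocycle x g))"
    using continuous_map_tr_cocycle[OF assms(1,2) _ \<beta>]
    by (auto simp: continuous_map_componentwise)
qed (rule continuous_map_tr_perm[OF assms(1-3)])

lemma
  assumes "x \<in> Tr" "g \<in> carrier G"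
  shows induced_map_fst_apply: "fst (induced_map G H Tr \<beta> g) x = \<beta> (cocycle x g)"
    and induced_map_snd_inv_apply: "Hilbert_Choice.inv (snd (induced_map G H Tr \<beta> g)) x = act x g"
  using assms by (simp_all add: induced_map_def inv_tr_perm_apply)

lemma hom_eq_via_tr_cocycle:
  assumes \<phi>: "\<phi> \<in> hom G L" and "group L" and x: "x \<in> Tr" and g: "g \<in> carrier G"
  shows "\<phi> g = inv\<^bsub>L\<^esub> \<phi> x \<otimes>\<^bsub>L\<^esub> \<phi> (cocycle x g) \<otimes>\<^bsub>L\<^esub> \<phi> (act x g)"
proof -
  interpret L: group L by fact
  have xc: "x \<in> carrier G" using x by (rule transversal_closed)
  have cc: "cocycle x g \<in> carrier G" using tr_cocycle_in_H[OF xc g] H_subset by blast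
  have ac: "act x g \<in> carrier G" using tr_act_closed[OF xc g] .
  have "cocycle x g \<otimes> act x g = x \<otimes> g"
    using xc g ac by (simp add: tr_cocycle_eq m_assoc)
  then have "\<phi> (cocycle x g) \<otimes>\<^bsub>L\<^esub> \<phi> (act x g) = \<phi> x \<otimes>\<^bsub>L\<^esub> \<phi> g"
    using hom_mult[OF \<phi> cc ac] hom_mult[OF \<phi> xc g] by simp
  then show ?thesis
    using hom_in_carrier[OF \<phi>] xc g cc ac by (simp add: L.m_assoc L.inv_solve_left)
qed

text \<open>The factorisation \<alpha> is not a homomorphism, and need not be: at a fixed x0 \<in> Tr it reads off
  c(x0, g) and x0 \<cdot> g from the image of g.\<close>
lemma factorization_through_induced_map:
  assumes tgL: "topological_group L TL" and \<phi>: "\<phi> \<in> hom G L"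
    and \<alpha>\<^sub>H: "continuous_map TB TL \<alpha>\<^sub>H" "\<And>h. h \<in> H \<Longrightarrow> \<phi> h = \<alpha>\<^sub>H (\<beta> h)"
  shows "\<exists>\<alpha>. continuous_map (Ind_topology TB Tr) TL \<alpha> \<and>
             (\<forall>g\<in>carrier G. \<phi> g = \<alpha> (induced_map G H Tr \<beta> g))"
proof -
  have L: "group L" using tgL by (rule topological_group_group)
  obtain x\<^sub>0 where x\<^sub>0: "x\<^sub>0 \<in> Tr" using transversal_nonempty by blast
  have \<phi>_closed: "x \<in> Tr \<Longrightarrow> \<phi> x \<in> carrier L" for x
    using hom_in_carrier[OF \<phi>] transversal_closed by blast
  define \<alpha> where "\<alpha> p = inv\<^bsub>L\<^esub> \<phi> x\<^sub>0 \<otimes>\<^bsub>L\<^esub> \<alpha>\<^sub>H (fst p x\<^sub>0) \<otimes>\<^bsub>L\<^esub> \<phi> (Hilbert_Choice.inv (snd p) x\<^sub>0)"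
    for p
  have "continuous_map (Ind_topology TB Tr) TL \<alpha>"
    unfolding Ind_topology_def
  proof (rule continuous_map_prod_discrete_topology)
    fix \<tau> assume "\<tau> \<in> {\<tau>. \<tau> permutes Tr}"
    then have "\<phi> (Hilbert_Choice.inv \<tau> x\<^sub>0) \<in> carrier L"
      using x\<^sub>0 \<phi>_closed by (simp add: permutes_in_image permutes_inv)
    moreover have "continuous_map (product_topology (\<lambda>_. TB) Tr) TL (\<lambda>k. \<alpha>\<^sub>H (k x\<^sub>0))"
      using continuous_map_compose[OF continuous_map_product_projection[OF x\<^sub>0] \<alpha>\<^sub>H(1)]
      by (simp add: o_def)
    ultimately show "continuous_map (product_topology (\<lambda>_. TB) Tr) TL (\<lambda>k. \<alpha> (k, \<tau>))"
      unfolding \<alpha>_def using x\<^sub>0 \<phi>_closed L topological_group_topspace[OF tgL]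
      by (intro continuous_map_group_mult[OF tgL]) auto
  qed
  moreover have "\<phi> g = \<alpha> (induced_map G H Tr \<beta> g)" if g: "g \<in> carrier G" for g
    using hom_eq_via_tr_cocycle[OF \<phi> L x\<^sub>0 g] \<alpha>\<^sub>H(2) tr_cocycle_in_H[OF transversal_closed[OF x\<^sub>0] g]
    by (simp add: \<alpha>_def induced_map_fst_apply[OF x\<^sub>0 g] induced_map_snd_inv_apply[OF x\<^sub>0 g])
  ultimately show ?thesis by blast
qed

end


section \<open>Bohr compactifications\<close>

lemma compact_group_closure_of_subgroup:
  assumes K: "compact_group K TK" and S: "subgroup S K"
  shows "compact_group (K\<lparr>carrier := TK closure_of S\<rparr>) (subtopology TK (TK closure_of S))"
proof -
  have tgK: "topological_group K TK" using K by (simp add: compact_group_def)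
  have "compact_space (subtopology TK (TK closure_of S))"
    using K by (intro compact_space_subtopology closedin_compact_space) (auto simp: compact_group_def)
  then show ?thesis
    using K topological_group_subgroup[OF tgK subgroup_closure_of[OF tgK S]]
    by (simp add: compact_group_def Hausdorff_space_subtopology)
qed

lemma bohr_compactification_closure_of_image:
  assumes tgG: "topological_group G TG" and K: "compact_group K TK"
    and f: "f \<in> hom G K" "continuous_map TG TK f"
    and factor: "\<And>(L::'l monoid) TL \<phi>. compact_group L TL \<Longrightarrow> \<phi> \<in> hom G L \<Longrightarrow> continuous_map TG TL \<phi> \<Longrightarrow>
        \<exists>\<alpha>. continuous_map TK TL \<alpha> \<and> (\<forall>g\<in>carrier G. \<phi> g = \<alpha> (f g))"
  shows "bohr_compactification TYPE('l) G TG (K\<lparr>carrier := TK closure_of (f ` carrier G)\<rparr>)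
           (subtopology TK (TK closure_of (f ` carrier G))) f"
proof -
  define C where "C = TK closure_of (f ` carrier G)"
  have tgK: "topological_group K TK" using K by (simp add: compact_group_def)
  have "group_hom G K f"
    using f(1) tgG tgK by (simp add: group_hom_def group_hom_axioms_def topological_group_group)
  then have "compact_group (K\<lparr>carrier := C\<rparr>) (subtopology TK C)"
    unfolding C_def by (intro compact_group_closure_of_subgroup[OF K] group_hom.img_is_subgroup)
  moreover have image_C: "f ` carrier G \<subseteq> C"
    unfolding C_def using f(1) topological_group_topspace[OF tgK]
    by (intro closure_of_subset) (auto simp: hom_def)
  then have "f \<in> hom G (K\<lparr>carrier := C\<rparr>)" and "continuous_map TG (subtopology TK C) f"
    using f topological_group_topspace[OF tgG] by (auto simp: hom_def continuous_map_in_subtopology)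
  moreover have "subtopology TK C closure_of (f ` carrier G) = C"
    using image_C by (simp add: closure_of_subtopology Int_absorb1 C_def)
  moreover have "\<forall>(L::'l monoid) TL \<phi>. compact_group L TL \<and> \<phi> \<in> hom G L \<and> continuous_map TG TL \<phi> \<longrightarrow>
                   (\<exists>\<alpha>. continuous_map (subtopology TK C) TL \<alpha> \<and> (\<forall>g\<in>carrier G. \<phi> g = \<alpha> (f g)))"
    using factor continuous_map_from_subtopology by blast
  ultimately show ?thesis
    using tgG by (simp add: bohr_compactification_def C_def)
qed

theorem proposition2p5:
  fixes G :: "'a monoid" and TG :: "'a topology" and H Tr :: "'a set"
    and B :: "'b monoid" and TB :: "'b topology" and \<beta> :: "'a \<Rightarrow> 'b"
  assumes "topological_group G TG"
    and "subgroup H G" and "closedin TG H" and "finite (rcosets\<^bsub>G\<^esub> H)"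
    and "bohr_compactification TYPE('l) (G\<lparr>carrier := H\<rparr>) (subtopology TG H) B TB \<beta>"
    and "Tr \<subseteq> carrier G" and "\<forall>g\<in>carrier G. \<exists>!x. x \<in> Tr \<and> g \<in> H #>\<^bsub>G\<^esub> x"
  shows "induced_map G H Tr \<beta> \<in> hom G (Ind B Tr)
    \<and> continuous_map TG (Ind_topology TB Tr) (induced_map G H Tr \<beta>)
    \<and> (let C = (Ind_topology TB Tr) closure_of (induced_map G H Tr \<beta> ` carrier G)
       in bohr_compactification TYPE('l) G TG ((Ind B Tr)\<lparr>carrier := C\<rparr>)
            (subtopology (Ind_topology TB Tr) C) (induced_map G H Tr \<beta>))"
proof -
  interpret right_transversal G H Tr
    using assms(2,6,7)
    by (intro right_transversal.intro right_transversal_axioms.intro topological_group_group[OF assms(1)]) auto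
  have B: "compact_group B TB" and \<beta>: "\<beta> \<in> hom (G\<lparr>carrier := H\<rparr>) B"
      "continuous_map (subtopology TG H) TB \<beta>"
    and bohr_H: "\<And>(L::'l monoid) TL \<phi>. compact_group L TL \<Longrightarrow> \<phi> \<in> hom (G\<lparr>carrier := H\<rparr>) L \<Longrightarrow>
        continuous_map (subtopology TG H) TL \<phi> \<Longrightarrow>
        \<exists>\<alpha>. continuous_map TB TL \<alpha> \<and> (\<forall>h\<in>H. \<phi> h = \<alpha> (\<beta> h))"
    using assms(5) unfolding bohr_compactification_def by auto
  have B_group: "group B" using B by (simp add: compact_group_def topological_group_def)
  interpret B: induced_group B Tr using B_group by (rule induced_group.intro)
  have fin: "finite Tr" using assms(4) by (rule finite_transversal)
  have hom: "induced_map G H Tr \<beta> \<in> hom G (Ind B Tr)" using B_group \<beta>(1) by (rule induced_map_hom)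
  have cont: "continuous_map TG (Ind_topology TB Tr) (induced_map G H Tr \<beta>)"
    using openin_subgroup_of_finite_index[OF assms(1-4)] fin \<beta>(2)
    by (intro continuous_map_induced_map[OF assms(1)])
  have "bohr_compactification TYPE('l) G TG ((Ind B Tr)\<lparr>carrier := C\<rparr>) (subtopology (Ind_topology TB Tr) C)
          (induced_map G H Tr \<beta>)"
    if "C = Ind_topology TB Tr closure_of (induced_map G H Tr \<beta> ` carrier G)" for C
    unfolding that
  proof (rule bohr_compactification_closure_of_image[OF assms(1) B.compact_group_Ind[OF B fin] hom cont])
    fix L :: "'l monoid" and TL \<phi>
    assume L: "compact_group L TL" and \<phi>: "\<phi> \<in> hom G L" "continuous_map TG TL \<phi>"
    have "\<phi> \<in> hom (G\<lparr>carrier := H\<rparr>) L" using \<phi>(1) H_subset by (auto simp: hom_def)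
    then obtain \<alpha>\<^sub>H where "continuous_map TB TL \<alpha>\<^sub>H" "\<forall>h\<in>H. \<phi> h = \<alpha>\<^sub>H (\<beta> h)"
      using bohr_H[OF L] continuous_map_from_subtopology[OF \<phi>(2)] by blast
    then show "\<exists>\<alpha>. continuous_map (Ind_topology TB Tr) TL \<alpha> \<and>
                   (\<forall>g\<in>carrier G. \<phi> g = \<alpha> (induced_map G H Tr \<beta> g))"
      using L \<phi>(1) by (intro factorization_through_induced_map) (auto simp: compact_group_def)
  qed
  then show ?thesis using hom cont by simp
qed

end
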